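(* There exist universal constants $c_B,c_1,c_2>0$ such that the following holds. Let $(Z,Y)$ be random with $Z\in[0,1]$, $Y\in\{0,1\}$, let $g:[0,1]\to[0,1]$, and let $\mathcal{B}=\{I_1,\dots,I_B\}$ be a fixed 2-well-balanced binning scheme (with respect to $g(Z)$). Let $T_3=\{(z_i,y_i)\}_{i=1}^n$ be i.i.d. draws from the distribution of $(Z,Y)$, and let $0<\delta<0.5$. If $n\ge c_B B\log\frac{B}{\delta}$, then with probability at least $1-\delta$, $\|\hat g_{\mathcal{B}}-g_{\mathcal{B}}\|_2\le \frac{c_2}{\sqrt n}\sqrt{\log\frac{B}{\delta}}$ and $\|\hat g_{\mathcal{B}}-g_{\mathcal{B}}\|_1\le \frac{c_1}{\sqrt{nB}}\sqrt{\log\frac{B}{\delta}}$.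
   Context: A binning scheme of size $B$ is a set of intervals $I_1,\dots,I_B$ partitioning $[0,1]$; $\beta(z)$ is the index $j$ with $z\in I_j$. It is 2-well-balanced (w.r.t. $g(Z)$) if $\frac{1}{2B}\le \Pr(g(Z)\in I_j)\le \frac{2}{B}$ for all $j$. The population binned function is $g_{\mathcal{B}}(z)=\mathbb{E}[g(Z)\mid g(Z)\in I_{\beta(g(z))}]$. The empirically binned function $\hat g_{\mathcal{B}}(z)$ is the average of the values $g(z_i)$, $(z_i,y_i)\in T_3$, with $g(z_i)\in I_{\beta(g(z))}$. For $h_1,h_2:[0,1]\to[0,1]$, $\|h_1-h_2\|_2^2=\mathbb{E}[(h_1(Z)-h_2(Z))^2]$ and $\|h_1-h_2\|_1=\mathbb{E}[|h_1(Z)-h_2(Z)|]$. *)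

theory Defs
  imports "HOL-Probability.Probability"
begin

definition binning_scheme :: "nat \<Rightarrow> (nat \<Rightarrow> real set) \<Rightarrow> bool" where
  "binning_scheme B I \<longleftrightarrow> B \<ge> 1 \<and> (\<forall>j<B. is_interval (I j)) \<and>
     (\<Union>j<B. I j) = {0..1} \<and> (\<forall>j<B. \<forall>k<B. j \<noteq> k \<longrightarrow> I j \<inter> I k = {})"

definition bin_index :: "nat \<Rightarrow> (nat \<Rightarrow> real set) \<Rightarrow> real \<Rightarrow> nat" where
  "bin_index B I z = (THE j. j < B \<and> z \<in> I j)"

definition bin_event :: "(real \<times> bool) measure \<Rightarrow> (real \<Rightarrow> real) \<Rightarrow> real set \<Rightarrow> (real \<times> bool) set" where
  "bin_event M g A = {x \<in> space M. g (fst x) \<in> A}"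

definition well_balanced2 :: "(real \<times> bool) measure \<Rightarrow> (real \<Rightarrow> real) \<Rightarrow> nat \<Rightarrow> (nat \<Rightarrow> real set) \<Rightarrow> bool" where
  "well_balanced2 M g B I \<longleftrightarrow> (\<forall>j<B. 1 / (2 * real B) \<le> measure M (bin_event M g (I j))
                                    \<and> measure M (bin_event M g (I j)) \<le> 2 / real B)"

definition pop_binned :: "(real \<times> bool) measure \<Rightarrow> (real \<Rightarrow> real) \<Rightarrow> nat \<Rightarrow> (nat \<Rightarrow> real set) \<Rightarrow> real \<Rightarrow> real" where
  "pop_binned M g B I z =
     (let A = bin_event M g (I (bin_index B I (g z)))
      in (\<integral>x. indicator A x * g (fst x) \<partial>M) / measure M A)"

definition emp_binned :: "(real \<Rightarrow> real) \<Rightarrow> nat \<Rightarrow> (nat \<Rightarrow> real set) \<Rightarrow> nat \<Rightarrow> (nat \<Rightarrow> real \<times> bool) \<Rightarrow> real \<Rightarrow> real" where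
  "emp_binned g B I n T z =
     (let K = {i \<in> {..<n}. g (fst (T i)) \<in> I (bin_index B I (g z))}
      in if K = {} then 0 else (\<Sum>i\<in>K. g (fst (T i))) / real (card K))"

definition L2_dist :: "(real \<times> bool) measure \<Rightarrow> (real \<Rightarrow> real) \<Rightarrow> (real \<Rightarrow> real) \<Rightarrow> real" where
  "L2_dist M h1 h2 = sqrt (\<integral>x. (h1 (fst x) - h2 (fst x))\<^sup>2 \<partial>M)"

definition L1_dist :: "(real \<times> bool) measure \<Rightarrow> (real \<Rightarrow> real) \<Rightarrow> (real \<Rightarrow> real) \<Rightarrow> real" where
  "L1_dist M h1 h2 = (\<integral>x. \<bar>h1 (fst x) - h2 (fst x)\<bar> \<partial>M)"

end

theory Submission
  imports Defs
begin

text \<open>Write \<open>p\<^sub>j\<close> for the probability of the \<open>j\<close>-th bin, \<open>m\<^sub>j\<close> for the conditional mean of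
  \<open>g(Z)\<close> on it and \<open>e\<^sub>j\<close> for the empirical mean of the sample points falling into it. Both
  distances are then weighted sums over the bins, \<open>\<Sum>\<^sub>j p\<^sub>j (e\<^sub>j - m\<^sub>j)\<^sup>2\<close> and
  \<open>\<Sum>\<^sub>j p\<^sub>j \<bar>e\<^sub>j - m\<^sub>j\<bar>\<close>. Inside a bin, \<open>g(Z)\<close> varies by at most the width \<open>w\<^sub>j\<close> of the
  bin, so Bernstein's inequality shows that with probability \<open>1 - 3 e\<^sup>-\<^sup>L\<close> more than
  \<open>n p\<^sub>j / 2\<close> sample points hit the bin and \<open>\<bar>e\<^sub>j - m\<^sub>j\<bar> \<le> 4 w\<^sub>j sqrt (L / (n p\<^sub>j))\<close>.
  As \<open>p\<^sub>j \<le> 2 / B\<close> and the widths sum to at most 1, summing over the bins and a union bound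
  with \<open>L = ln (3 B / \<delta>)\<close> give both estimates.\<close>

section \<open>Bernstein's inequality for i.i.d. sums\<close>

lemma exp_le_one_plus_x_plus_sq:
  fixes y :: real
  assumes "\<bar>y\<bar> \<le> 1"
  shows "exp y \<le> 1 + y + y\<^sup>2"
proof (cases "y \<ge> 0")
  case True
  then show ?thesis using exp_bound[of y] assms by auto
next
  case False
  define x where "x = - y"
  have x: "0 \<le> x" "x \<le> 1" using False assms by (auto simp: x_def)
  have "1 \<le> (1 - x + x\<^sup>2) * (1 + x + x\<^sup>2 / 2)"
  proof -
    have "(1 - x + x\<^sup>2) * (1 + x + x\<^sup>2 / 2) = 1 + x\<^sup>2 / 2 + x ^ 3 / 2 + x ^ 4 / 2"
      by (simp add: power2_eq_square power3_eq_cube power4_eq_xxxx field_simps)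
    then show ?thesis using x by simp
  qed
  also have "\<dots> \<le> (1 - x + x\<^sup>2) * exp x"
    using exp_lower_Taylor_quadratic[of x] x
    by (intro mult_left_mono) (auto simp: power2_eq_square intro: add_nonneg_nonneg)
  finally have "1 / exp x \<le> 1 - x + x\<^sup>2" by (simp add: divide_le_eq)
  then show ?thesis by (simp add: x_def exp_minus field_simps)
qed

context prob_space
begin

lemma integral_exp_le_exp_variance:
  fixes f :: "'a \<Rightarrow> real"
  assumes f[measurable]: "f \<in> borel_measurable M"
    and bounded: "\<And>x. x \<in> space M \<Longrightarrow> \<bar>f x\<bar> \<le> w"
    and l: "0 \<le> l" "l * w \<le> 1"
    and centered: "expectation f = 0" and variance: "expectation (\<lambda>x. (f x)\<^sup>2) \<le> v"
  shows "integrable M (\<lambda>x. exp (l * f x))"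
    and "expectation (\<lambda>x. exp (l * f x)) \<le> exp (l\<^sup>2 * v)"
proof -
  have lf: "\<bar>l * f x\<bar> \<le> 1" if "x \<in> space M" for x
    using mult_left_mono[OF bounded[OF that] l(1)] l by (simp add: abs_mult)
  have int_f: "integrable M f"
    using bounded by (intro integrable_const_bound[where B=w]) auto
  have int_sq: "integrable M (\<lambda>x. (f x)\<^sup>2)"
    using bounded by (intro integrable_const_bound[where B="w\<^sup>2"])
      (auto simp: abs_le_square_iff[symmetric] intro: order_trans[OF _ abs_ge_self])
  show int_exp: "integrable M (\<lambda>x. exp (l * f x))"
    using lf by (intro integrable_const_bound[where B="exp 1"]) (auto simp: abs_le_iff)
  have "expectation (\<lambda>x. exp (l * f x)) \<le> expectation (\<lambda>x. 1 + l * f x + l\<^sup>2 * (f x)\<^sup>2)"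
    using int_exp int_f int_sq exp_le_one_plus_x_plus_sq[OF lf]
    by (intro integral_mono) (auto simp: power_mult_distrib)
  also have "\<dots> = 1 + l * expectation f + l\<^sup>2 * expectation (\<lambda>x. (f x)\<^sup>2)"
    using int_f int_sq by (simp add: prob_space)
  also have "\<dots> \<le> 1 + l\<^sup>2 * v"
    using centered variance by (simp add: mult_left_mono)
  also have "\<dots> \<le> exp (l\<^sup>2 * v)"
    using exp_ge_add_one_self by (simp add: add.commute)
  finally show "expectation (\<lambda>x. exp (l * f x)) \<le> exp (l\<^sup>2 * v)" .
qed

lemma prob_sum_iid_ge_le_exp:
  fixes f :: "'a \<Rightarrow> real"
  assumes f[measurable]: "f \<in> borel_measurable M"
    and bounded: "\<And>x. x \<in> space M \<Longrightarrow> \<bar>f x\<bar> \<le> w"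
    and l: "0 \<le> l" "l * w \<le> 1"
    and centered: "expectation f = 0" and variance: "expectation (\<lambda>x. (f x)\<^sup>2) \<le> v"
  shows "measure (PiM {..<n} (\<lambda>_. M)) {T \<in> space (PiM {..<n} (\<lambda>_. M)). t \<le> (\<Sum>i<n. f (T i))}
           \<le> exp (- l * t + real n * l\<^sup>2 * v)"
proof -
  define P where "P = PiM {..<n} (\<lambda>_. M)"
  interpret product: product_prob_space "\<lambda>_::nat. M" "{..<n}" by unfold_locales
  interpret P: prob_space P unfolding P_def by (rule prob_space_PiM) (rule prob_space_axioms)
  note mgf = integral_exp_le_exp_variance[OF f bounded l centered variance]
  show ?thesis
  proof (cases "l = 0")
    case True
    then show ?thesis using P.prob_le_1 by (simp add: P_def)
  next
    case False
    with l have "0 < l" by simp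
    have "ennreal (measure P {T \<in> space P. t \<le> (\<Sum>i<n. f (T i))})
        \<le> ennreal (exp (- l * t)) * (\<integral>\<^sup>+T. ennreal (exp (l * (\<Sum>i<n. f (T i)))) * indicator (space P) T \<partial>P)"
      unfolding P.emeasure_eq_measure[symmetric]
      by (rule Chernoff_ineq_nn_integral_ge[OF \<open>0 < l\<close>]) (auto simp: P_def)
    also have "(\<integral>\<^sup>+T. ennreal (exp (l * (\<Sum>i<n. f (T i)))) * indicator (space P) T \<partial>P)
        = (\<integral>\<^sup>+T. (\<Prod>i\<in>{..<n}. ennreal (exp (l * f (T i)))) \<partial>P)"
      by (intro nn_integral_cong) (simp add: sum_distrib_left exp_sum prod_ennreal)
    also have "\<dots> = (\<Prod>i\<in>{..<n}. \<integral>\<^sup>+x. ennreal (exp (l * f x)) \<partial>M)"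
      unfolding P_def by (rule product.product_nn_integral_prod[where f="\<lambda>_ x. ennreal (exp (l * f x))"]) auto
    also have "ennreal (exp (- l * t)) * \<dots> \<le> ennreal (exp (- l * t)) * (\<Prod>i\<in>{..<n}. ennreal (exp (l\<^sup>2 * v)))"
      using mgf by (intro mult_left_mono prod_mono_ennreal) (simp_all add: nn_integral_eq_integral ennreal_leI)
    also have "\<dots> = ennreal (exp (- l * t + real n * l\<^sup>2 * v))"
      by (simp add: ennreal_power ennreal_mult[symmetric] exp_add[symmetric] exp_of_nat_mult[symmetric] mult_ac)
    finally have "ennreal (measure P {T \<in> space P. t \<le> (\<Sum>i<n. f (T i))})
        \<le> ennreal (exp (- l * t + real n * l\<^sup>2 * v))" .
    then show ?thesis by (simp add: P_def)
  qed
qed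

text \<open>The Chernoff bound with \<open>l = sqrt (L / (n v))\<close>; the hypothesis \<open>L w\<^sup>2 \<le> n v\<close>
  makes this \<open>l\<close> admissible.\<close>
lemma prob_sum_iid_ge_Bernstein:
  fixes f :: "'a \<Rightarrow> real" and n :: nat
  assumes f: "f \<in> borel_measurable M"
    and bounded: "\<And>x. x \<in> space M \<Longrightarrow> \<bar>f x\<bar> \<le> w"
    and centered: "expectation f = 0" and variance: "expectation (\<lambda>x. (f x)\<^sup>2) \<le> v"
    and "0 < v" "0 < n" "0 \<le> L" and variance_dominates: "L * w\<^sup>2 \<le> real n * v"
    and t: "2 * sqrt (real n * v * L) \<le> t"
  shows "measure (PiM {..<n} (\<lambda>_. M)) {T \<in> space (PiM {..<n} (\<lambda>_. M)). t \<le> (\<Sum>i<n. f (T i))}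
           \<le> exp (- L)"
proof -
  define l where "l = sqrt (L / (real n * v))"
  have nv: "0 < real n * v" using \<open>0 < v\<close> \<open>0 < n\<close> by simp
  have "0 \<le> l" using nv \<open>0 \<le> L\<close> by (simp add: l_def)
  have "l * w \<le> l * \<bar>w\<bar>"
    using \<open>0 \<le> l\<close> by (simp add: mult_left_mono)
  also have "\<dots> = sqrt (L / (real n * v) * w\<^sup>2)"
    unfolding l_def real_sqrt_mult real_sqrt_abs ..
  also have "\<dots> \<le> 1"
    using variance_dominates nv by (simp add: divide_le_eq)
  finally have "l * w \<le> 1" .
  have "l * sqrt (real n * v * L) = sqrt (L / (real n * v) * (real n * v * L))"
    unfolding l_def real_sqrt_mult ..
  also have "L / (real n * v) * (real n * v * L) = L\<^sup>2"
    using \<open>0 < v\<close> \<open>0 < n\<close> by (simp add: field_simps power2_eq_square)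
  finally have l_sqrt: "l * sqrt (real n * v * L) = L"
    using \<open>0 \<le> L\<close> by simp
  have l_sq: "real n * l\<^sup>2 * v = L"
    using \<open>0 < v\<close> \<open>0 < n\<close> \<open>0 \<le> L\<close> by (simp add: l_def)
  have "- l * t + real n * l\<^sup>2 * v \<le> - l * (2 * sqrt (real n * v * L)) + real n * l\<^sup>2 * v"
    using t \<open>0 \<le> l\<close> by (simp add: mult_left_mono)
  also have "\<dots> = - L"
    using l_sqrt l_sq by simp
  finally show ?thesis
    using prob_sum_iid_ge_le_exp[OF f bounded \<open>0 \<le> l\<close> \<open>l * w \<le> 1\<close> centered variance, of n t]
    by (meson exp_le_cancel_iff order_trans)
qed

end

section \<open>Empirical conditional means\<close>

definition cond_mean :: "'a measure \<Rightarrow> 'a set \<Rightarrow> ('a \<Rightarrow> real) \<Rightarrow> real" where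
  "cond_mean M A h = (\<integral>x. indicator A x * h x \<partial>M) / measure M A"

definition emp_cond_mean :: "'a set \<Rightarrow> ('a \<Rightarrow> real) \<Rightarrow> nat \<Rightarrow> (nat \<Rightarrow> 'a) \<Rightarrow> real" where
  "emp_cond_mean A h n T =
     (let K = {i \<in> {..<n}. T i \<in> A}
      in if K = {} then 0 else (\<Sum>i\<in>K. h (T i)) / real (card K))"

lemma emp_cond_mean_eq_ratio:
  "emp_cond_mean A h n T =
     (if (\<Sum>i<n. indicator A (T i)) = (0::real) then 0
      else (\<Sum>i<n. indicator A (T i) * h (T i)) / (\<Sum>i<n. indicator A (T i)))"
proof -
  define K where "K = {i \<in> {..<n}. T i \<in> A}"
  have "(\<Sum>i<n. indicator A (T i) :: real) = (\<Sum>i\<in>K. 1)"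
    unfolding K_def sum.inter_filter[OF finite_lessThan] by (intro sum.cong) auto
  moreover have "(\<Sum>i<n. indicator A (T i) * h (T i)) = (\<Sum>i\<in>K. h (T i))"
    unfolding K_def sum.inter_filter[OF finite_lessThan] by (intro sum.cong) auto
  moreover have "emp_cond_mean A h n T = (if K = {} then 0 else (\<Sum>i\<in>K. h (T i)) / real (card K))"
    unfolding emp_cond_mean_def K_def Let_def ..
  ultimately show ?thesis
    by (simp add: K_def)
qed

lemma measurable_emp_cond_mean[measurable]:
  assumes [measurable]: "A \<in> sets M" "h \<in> borel_measurable M"
  shows "(\<lambda>T. emp_cond_mean A h n T) \<in> borel_measurable (PiM {..<n} (\<lambda>_. M))"
  unfolding emp_cond_mean_eq_ratio by measurable

lemma ratio_dev_le:
  fixes a N G m w L :: real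
  assumes "0 < a" "a / 2 < N" "0 \<le> w" "0 \<le> L" and dev: "\<bar>G - m * N\<bar> \<le> 2 * sqrt (a * w\<^sup>2 * L)"
  shows "\<bar>G / N - m\<bar> \<le> 4 * w * sqrt (L / a)"
proof -
  have "0 < N" using assms by linarith
  have "\<bar>G / N - m\<bar> = \<bar>G - m * N\<bar> / N"
    using \<open>0 < N\<close> by (simp add: field_simps)
  also have "\<dots> \<le> 2 * sqrt (a * w\<^sup>2 * L) / (a / 2)"
    using assms \<open>0 < N\<close> by (intro frac_le) auto
  also have "\<dots> = 4 * w * sqrt (L / a)"
    using \<open>0 < a\<close> \<open>0 \<le> w\<close>
    by (simp add: real_sqrt_mult real_sqrt_divide field_simps)
  finally show ?thesis .
qed

context prob_space
begin

lemma integrable_indicator_mult_spread: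
  fixes h :: "'a \<Rightarrow> real"
  assumes A: "A \<in> events" and h: "h \<in> borel_measurable M"
    and spread: "\<And>x y. x \<in> A \<Longrightarrow> y \<in> A \<Longrightarrow> \<bar>h x - h y\<bar> \<le> w" and "y \<in> A"
  shows "integrable M (\<lambda>x. indicator A x * h x)"
proof (rule integrable_const_bound[where B="\<bar>h y\<bar> + w"])
  have "0 \<le> w" using spread[OF \<open>y \<in> A\<close> \<open>y \<in> A\<close>] by simp
  have "\<bar>indicator A x * h x\<bar> \<le> \<bar>h y\<bar> + w" for x
    using spread[of x y] \<open>y \<in> A\<close> \<open>0 \<le> w\<close> by (cases "x \<in> A") auto
  then show "AE x in M. norm (indicator A x * h x) \<le> \<bar>h y\<bar> + w" by simp
qed (use A h in measurable)

lemma cond_mean_dev_le: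
  fixes h :: "'a \<Rightarrow> real"
  assumes A: "A \<in> events" and "0 < prob A" and h: "h \<in> borel_measurable M"
    and spread: "\<And>x y. x \<in> A \<Longrightarrow> y \<in> A \<Longrightarrow> \<bar>h x - h y\<bar> \<le> w" and "y \<in> A"
  shows "\<bar>h y - cond_mean M A h\<bar> \<le> w"
proof -
  note int_h = integrable_indicator_mult_spread[OF A h spread \<open>y \<in> A\<close>]
  have int_A: "integrable M (indicator A :: 'a \<Rightarrow> real)"
    using A by (simp add: emeasure_eq_measure)
  have "prob A * (cond_mean M A h - h y) = expectation (\<lambda>x. indicator A x * h x - h y * indicator A x)"
    using \<open>0 < prob A\<close> int_h int_A A by (simp add: cond_mean_def algebra_simps)
  also have "\<dots> = expectation (\<lambda>x. indicator A x * (h x - h y))"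
    by (simp add: algebra_simps)
  also have "\<bar>\<dots>\<bar> \<le> expectation (\<lambda>x. \<bar>indicator A x * (h x - h y)\<bar>)"
    by (rule integral_abs_bound)
  also have "\<dots> \<le> expectation (\<lambda>x. indicator A x * w)"
  proof (rule integral_mono)
    have "integrable M (\<lambda>x. indicator A x * (h x - h y))"
      using spread h by (intro integrable_indicator_mult_spread[OF A _ _ \<open>y \<in> A\<close>, of _ w]) auto
    then show "integrable M (\<lambda>x. \<bar>indicator A x * (h x - h y)\<bar>)" by simp
    show "integrable M (\<lambda>x. indicator A x * w)" using int_A by simp
    show "\<bar>indicator A x * (h x - h y)\<bar> \<le> indicator A x * w" for x
      using spread[of x y] \<open>y \<in> A\<close> by (cases "x \<in> A") auto
  qed
  also have "\<dots> = prob A * w" using A by simp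
  finally show ?thesis
    using \<open>0 < prob A\<close> by (simp add: abs_mult abs_minus_commute)
qed

lemma indicator_centered_moments:
  assumes A: "A \<in> events"
  shows "expectation (\<lambda>x. prob A - indicator A x) = 0"
    and "expectation (\<lambda>x. (prob A - indicator A x)\<^sup>2) \<le> prob A"
proof -
  have int_A: "integrable M (indicator A :: 'a \<Rightarrow> real)"
    using A by (simp add: emeasure_eq_measure)
  show "expectation (\<lambda>x. prob A - indicator A x) = 0"
    using int_A A by (simp add: prob_space)
  have "(prob A - indicator A x)\<^sup>2 = (prob A)\<^sup>2 + (1 - 2 * prob A) * indicator A x" for x
    by (simp add: indicator_def power2_eq_square algebra_simps)
  then have "expectation (\<lambda>x. (prob A - indicator A x)\<^sup>2) = (prob A)\<^sup>2 + (1 - 2 * prob A) * prob A"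
    using int_A A by (simp add: prob_space)
  also have "\<dots> \<le> prob A" by (simp add: power2_eq_square algebra_simps)
  finally show "expectation (\<lambda>x. (prob A - indicator A x)\<^sup>2) \<le> prob A" .
qed

lemma cond_centered_moments:
  fixes h :: "'a \<Rightarrow> real"
  assumes A: "A \<in> events" and "0 < prob A" and h: "h \<in> borel_measurable M"
    and spread: "\<And>x y. x \<in> A \<Longrightarrow> y \<in> A \<Longrightarrow> \<bar>h x - h y\<bar> \<le> w"
  defines "f \<equiv> \<lambda>x. indicator A x * (h x - cond_mean M A h)"
  shows "\<And>x. \<bar>f x\<bar> \<le> w"
    and "expectation f = 0"
    and "expectation (\<lambda>x. (f x)\<^sup>2) \<le> prob A * w\<^sup>2"
proof -
  obtain y where "y \<in> A" using \<open>0 < prob A\<close> by (metis ex_in_conv less_irrefl measure_empty)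
  have "0 \<le> w" using spread[OF \<open>y \<in> A\<close> \<open>y \<in> A\<close>] by simp
  note int_h = integrable_indicator_mult_spread[OF A h spread \<open>y \<in> A\<close>]
  have int_A: "integrable M (indicator A :: 'a \<Rightarrow> real)"
    using A by (simp add: emeasure_eq_measure)
  show bounded: "\<bar>f x\<bar> \<le> w" for x
    using cond_mean_dev_le[OF A \<open>0 < prob A\<close> h spread] \<open>0 \<le> w\<close>
    by (cases "x \<in> A") (auto simp: f_def)
  have "expectation f = expectation (\<lambda>x. indicator A x * h x - cond_mean M A h * indicator A x)"
    by (simp add: f_def algebra_simps)
  also have "\<dots> = 0"
    using int_h int_A A \<open>0 < prob A\<close> by (simp add: cond_mean_def)
  finally show "expectation f = 0" .
  have "(f x)\<^sup>2 \<le> w\<^sup>2 * indicator A x" for x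
    using bounded[of x] \<open>0 \<le> w\<close> by (cases "x \<in> A") (auto simp: f_def abs_le_square_iff[symmetric])
  moreover have "integrable M (\<lambda>x. (f x)\<^sup>2)"
    using bounded \<open>0 \<le> w\<close> A h
    by (intro integrable_const_bound[where B="w\<^sup>2"]) (auto simp: f_def abs_le_square_iff[symmetric])
  ultimately have "expectation (\<lambda>x. (f x)\<^sup>2) \<le> expectation (\<lambda>x. w\<^sup>2 * indicator A x)"
    using int_A by (intro integral_mono) auto
  also have "\<dots> = prob A * w\<^sup>2" using A by simp
  finally show "expectation (\<lambda>x. (f x)\<^sup>2) \<le> prob A * w\<^sup>2" .
qed

end

lemma emp_cond_mean_dev_le:
  fixes h :: "'a \<Rightarrow> real" and n :: nat
  assumes "0 < real n * p" "0 \<le> w" "0 \<le> L"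
    and count: "(\<Sum>i<n. p - indicator A (T i)) < real n * p / 2"
    and dev: "\<bar>\<Sum>i<n. indicator A (T i) * (h (T i) - m)\<bar> < 2 * sqrt (real n * (p * w\<^sup>2) * L)"
  shows "\<bar>emp_cond_mean A h n T - m\<bar> \<le> 4 * w * sqrt (L / (real n * p))"
proof -
  define N where "N = (\<Sum>i<n. indicator A (T i) :: real)"
  define G where "G = (\<Sum>i<n. indicator A (T i) * h (T i))"
  have "real n * p / 2 < N"
    using count by (simp add: N_def sum_subtractf mult.commute)
  moreover have "\<bar>G - m * N\<bar> \<le> 2 * sqrt (real n * p * w\<^sup>2 * L)"
    using dev by (simp add: G_def N_def sum_subtractf sum_distrib_left algebra_simps)
  ultimately have "\<bar>G / N - m\<bar> \<le> 4 * w * sqrt (L / (real n * p))"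
    using assms by (intro ratio_dev_le) auto
  moreover have "emp_cond_mean A h n T = G / N"
    using \<open>real n * p / 2 < N\<close> \<open>0 < real n * p\<close> by (simp add: emp_cond_mean_eq_ratio N_def G_def)
  ultimately show ?thesis by simp
qed

context prob_space
begin

lemma prob_hits_le_half_expected:
  fixes n :: nat
  assumes A: "A \<in> events" and "0 < L" and enough_samples: "16 * L \<le> real n * prob A"
  shows "measure (PiM {..<n} (\<lambda>_. M)) {T \<in> space (PiM {..<n} (\<lambda>_. M)).
           real n * prob A / 2 \<le> (\<Sum>i<n. prob A - indicator A (T i))} \<le> exp (- L)"
proof (rule prob_sum_iid_ge_Bernstein[where w=1 and v="prob A"])
  show "expectation (\<lambda>x. prob A - indicator A x) = 0"
    and "expectation (\<lambda>x. (prob A - indicator A x)\<^sup>2) \<le> prob A"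
    using indicator_centered_moments[OF A] by simp_all
  have "0 < real n * prob A" using enough_samples \<open>0 < L\<close> by simp
  then show "0 < prob A" "0 < n" by (simp_all add: zero_less_mult_iff)
  have "real n * prob A * (16 * L) \<le> real n * prob A * (real n * prob A)"
    using enough_samples \<open>0 < real n * prob A\<close> by (intro mult_left_mono) auto
  then have "sqrt (real n * prob A * L) \<le> sqrt ((real n * prob A / 4)\<^sup>2)"
    by (simp add: power2_eq_square)
  then show "2 * sqrt (real n * prob A * L) \<le> real n * prob A / 2"
    using \<open>0 < real n * prob A\<close> by simp
qed (use A \<open>0 < L\<close> enough_samples in \<open>auto simp: indicator_def\<close>)

lemma prob_centered_hit_sum_dev_ge:
  fixes h :: "'a \<Rightarrow> real" and n :: nat
  assumes A: "A \<in> events" and "0 < prob A" and h: "h \<in> borel_measurable M"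
    and spread: "\<And>x y. x \<in> A \<Longrightarrow> y \<in> A \<Longrightarrow> \<bar>h x - h y\<bar> \<le> w" and "0 < w"
    and "0 < n" "0 \<le> L" and enough_samples: "L \<le> real n * prob A"
  shows "measure (PiM {..<n} (\<lambda>_. M)) {T \<in> space (PiM {..<n} (\<lambda>_. M)).
           2 * sqrt (real n * (prob A * w\<^sup>2) * L)
             \<le> \<bar>\<Sum>i<n. indicator A (T i) * (h (T i) - cond_mean M A h)\<bar>} \<le> 2 * exp (- L)"
proof -
  define P where "P = PiM {..<n} (\<lambda>_. M)"
  define f where "f = (\<lambda>x. indicator A x * (h x - cond_mean M A h))"
  define t where "t = 2 * sqrt (real n * (prob A * w\<^sup>2) * L)"
  have [measurable]: "f \<in> borel_measurable M"
    unfolding f_def using A h by measurable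
  have f: "\<bar>f x\<bar> \<le> w" "expectation f = 0" "expectation (\<lambda>x. (f x)\<^sup>2) \<le> prob A * w\<^sup>2" for x
    using cond_centered_moments[OF A \<open>0 < prob A\<close> h spread] by (simp_all add: f_def)
  have "L * w\<^sup>2 \<le> real n * (prob A * w\<^sup>2)"
    using mult_right_mono[OF enough_samples, of "w\<^sup>2"] by (simp add: mult_ac)
  then have "measure P {T \<in> space P. t \<le> (\<Sum>i<n. f (T i))} \<le> exp (- L)"
    and "measure P {T \<in> space P. t \<le> (\<Sum>i<n. - f (T i))} \<le> exp (- L)"
    unfolding P_def t_def using assms f
    by (intro prob_sum_iid_ge_Bernstein[where w=w and v="prob A * w\<^sup>2"]; simp)+
  moreover have "{T \<in> space P. t \<le> \<bar>\<Sum>i<n. f (T i)\<bar>}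
      = {T \<in> space P. t \<le> (\<Sum>i<n. f (T i))} \<union> {T \<in> space P. t \<le> (\<Sum>i<n. - f (T i))}"
    by (auto simp: sum_negf abs_if)
  moreover have "measure P ({T \<in> space P. t \<le> (\<Sum>i<n. f (T i))} \<union> {T \<in> space P. t \<le> (\<Sum>i<n. - f (T i))})
      \<le> measure P {T \<in> space P. t \<le> (\<Sum>i<n. f (T i))} + measure P {T \<in> space P. t \<le> (\<Sum>i<n. - f (T i))}"
    by (rule measure_Un_le) (simp_all add: P_def)
  ultimately have "measure P {T \<in> space P. t \<le> \<bar>\<Sum>i<n. f (T i)\<bar>} \<le> 2 * exp (- L)"
    by simp
  then show ?thesis by (simp add: P_def t_def f_def)
qed

lemma prob_emp_cond_mean_dev_gt:
  fixes h :: "'a \<Rightarrow> real" and n :: nat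
  assumes A: "A \<in> events" and "0 < prob A" and h: "h \<in> borel_measurable M"
    and spread: "\<And>x y. x \<in> A \<Longrightarrow> y \<in> A \<Longrightarrow> \<bar>h x - h y\<bar> \<le> w" and "0 < w"
    and "0 < L" and enough_samples: "16 * L \<le> real n * prob A"
  shows "measure (PiM {..<n} (\<lambda>_. M)) {T \<in> space (PiM {..<n} (\<lambda>_. M)).
           4 * w * sqrt (L / (real n * prob A)) < \<bar>emp_cond_mean A h n T - cond_mean M A h\<bar>}
         \<le> 3 * exp (- L)"
proof -
  define P where "P = PiM {..<n} (\<lambda>_. M)"
  interpret P: prob_space P unfolding P_def by (rule prob_space_PiM) (rule prob_space_axioms)
  define p where "p = prob A"
  define m where "m = cond_mean M A h"
  define E1 where "E1 = {T \<in> space P. real n * p / 2 \<le> (\<Sum>i<n. p - indicator A (T i))}"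
  define E2 where "E2 = {T \<in> space P.
    2 * sqrt (real n * (p * w\<^sup>2) * L) \<le> \<bar>\<Sum>i<n. indicator A (T i) * (h (T i) - m)\<bar>}"
  have "0 < real n * p" using enough_samples \<open>0 < L\<close> by (simp add: p_def)
  then have "0 < n" by (simp add: zero_less_mult_iff)
  have sets: "E1 \<in> sets P" "E2 \<in> sets P"
    unfolding E1_def E2_def P_def using A h by measurable
  have "{T \<in> space P. 4 * w * sqrt (L / (real n * p)) < \<bar>emp_cond_mean A h n T - m\<bar>} \<subseteq> E1 \<union> E2"
  proof (intro subsetI, rule ccontr)
    fix T assume T: "T \<in> {T \<in> space P. 4 * w * sqrt (L / (real n * p)) < \<bar>emp_cond_mean A h n T - m\<bar>}"
      and "T \<notin> E1 \<union> E2"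
    then have "\<bar>emp_cond_mean A h n T - m\<bar> \<le> 4 * w * sqrt (L / (real n * p))"
      using \<open>0 < w\<close> \<open>0 < L\<close>
      by (intro emp_cond_mean_dev_le[OF \<open>0 < real n * p\<close>]) (auto simp: E1_def E2_def)
    then show False using T by simp
  qed
  then have "measure P {T \<in> space P. 4 * w * sqrt (L / (real n * p)) < \<bar>emp_cond_mean A h n T - m\<bar>}
      \<le> measure P (E1 \<union> E2)"
    using sets by (intro P.finite_measure_mono) auto
  also have "\<dots> \<le> measure P E1 + measure P E2"
    using sets by (rule measure_Un_le)
  also have "\<dots> \<le> exp (- L) + 2 * exp (- L)"
  proof (rule add_mono)
    show "measure P E1 \<le> exp (- L)"
      unfolding E1_def P_def p_def using A \<open>0 < L\<close> enough_samples by (rule prob_hits_le_half_expected)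
    show "measure P E2 \<le> 2 * exp (- L)"
      unfolding E2_def P_def p_def m_def using \<open>0 < n\<close> \<open>0 < L\<close> enough_samples
      by (intro prob_centered_hit_sum_dev_ge[OF A \<open>0 < prob A\<close> h spread \<open>0 < w\<close>]) auto
  qed
  finally show ?thesis by (simp add: P_def p_def m_def)
qed

end

section \<open>Binning schemes\<close>

lemma abs_diff_le_measure_interval:
  fixes S :: "real set"
  assumes "is_interval S" "S \<subseteq> {a..b}" "x \<in> S" "y \<in> S"
  shows "\<bar>x - y\<bar> \<le> measure lborel S"
proof -
  have "S \<in> sets borel" using assms(1) by (rule real_interval_borel_measurable)
  have S: "S \<in> fmeasurable lborel"
    by (rule fmeasurableI2[where A="{a..b}"]) (use assms(2) \<open>S \<in> sets borel\<close> in \<open>auto intro!: fmeasurableI simp: emeasure_lborel_Icc_eq\<close>)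
  have "min x y \<in> S" "max x y \<in> S"
    using assms(3,4) by (simp_all add: min_def max_def)
  then have "{min x y..max x y} \<subseteq> S"
    using assms(1) unfolding is_interval_1 by (meson atLeastAtMost_iff subsetI)
  have "\<bar>x - y\<bar> = measure lborel {min x y..max x y}"
    by (cases "x \<le> y") (simp_all add: min_def max_def)
  also have "\<dots> \<le> measure lborel S"
    by (rule measure_mono_fmeasurable[OF \<open>{min x y..max x y} \<subseteq> S\<close> _ S]) simp
  finally show ?thesis .
qed

lemma binning_scheme_subset: "binning_scheme B I \<Longrightarrow> j < B \<Longrightarrow> I j \<subseteq> {0..1}"
  unfolding binning_scheme_def by blast

lemma binning_scheme_sets: "binning_scheme B I \<Longrightarrow> j < B \<Longrightarrow> I j \<in> sets borel"
  unfolding binning_scheme_def by (auto intro: real_interval_borel_measurable)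

lemma binning_scheme_disjoint:
  "binning_scheme B I \<Longrightarrow> j < B \<Longrightarrow> k < B \<Longrightarrow> y \<in> I j \<Longrightarrow> y \<in> I k \<Longrightarrow> j = k"
  unfolding binning_scheme_def by blast

lemma bin_index_in_bin:
  assumes "binning_scheme B I" "y \<in> {0..1}"
  shows "bin_index B I y < B" "y \<in> I (bin_index B I y)"
proof -
  obtain j where "j < B" "y \<in> I j"
    using assms unfolding binning_scheme_def by blast
  then have "\<exists>!j. j < B \<and> y \<in> I j"
    using binning_scheme_disjoint[OF assms(1)] by blast
  then have "bin_index B I y < B \<and> y \<in> I (bin_index B I y)"
    unfolding bin_index_def by (rule theI')
  then show "bin_index B I y < B" "y \<in> I (bin_index B I y)" by simp_all
qed

lemma bin_index_fun_eq_sum: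
  fixes F :: "nat \<Rightarrow> real"
  assumes "binning_scheme B I" "y \<in> {0..1}"
  shows "F (bin_index B I y) = (\<Sum>j<B. indicator (I j) y * F j)"
proof -
  have "(\<Sum>j<B. indicator (I j) y * F j) = (\<Sum>j<B. if j = bin_index B I y then F j else 0)"
    using bin_index_in_bin[OF assms] binning_scheme_disjoint[OF assms(1)]
    by (intro sum.cong) (auto simp: indicator_def)
  then show ?thesis
    using bin_index_in_bin[OF assms] by simp
qed

lemma measurable_bin_index_fun:
  fixes F :: "nat \<Rightarrow> real"
  assumes "binning_scheme B I"
  shows "(\<lambda>y. F (bin_index B I y)) \<in> borel_measurable borel"
proof -
  have "bin_index B I y = (THE j. False)" if "y \<notin> {0..1}" for y
    using that binning_scheme_subset[OF assms] unfolding bin_index_def by (metis subsetD)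
  then have "(\<lambda>y. F (bin_index B I y))
      = (\<lambda>y. if y \<in> {0..1} then \<Sum>j<B. indicator (I j) y * F j else F (THE j. False))"
    using bin_index_fun_eq_sum[OF assms] by auto
  also have "\<dots> \<in> borel_measurable borel"
    using binning_scheme_sets[OF assms] by measurable
  finally show ?thesis .
qed

lemma binning_scheme_sum_measure_le_1:
  assumes "binning_scheme B I"
  shows "(\<Sum>j<B. measure lborel (I j)) \<le> 1"
proof -
  have "(\<Sum>j<B. measure lborel (I j)) = measure lborel (\<Union>j<B. I j)"
  proof (rule measure_finite_Union[symmetric])
    show "disjoint_family_on I {..<B}"
      using assms unfolding binning_scheme_def disjoint_family_on_def by auto
    show "emeasure lborel (I j) \<noteq> \<infinity>" if "j \<in> {..<B}" for j
      using emeasure_mono[OF binning_scheme_subset[OF assms], of j lborel] that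
      by (auto simp: top_unique)
  qed (use binning_scheme_sets[OF assms] in auto)
  also have "\<dots> = 1"
    using assms unfolding binning_scheme_def by simp
  finally show ?thesis by simp
qed

lemma (in prob_space) expectation_sum_indicator_mult:
  fixes F :: "'b \<Rightarrow> real"
  assumes "\<And>j. j \<in> J \<Longrightarrow> S j \<in> events"
  shows "expectation (\<lambda>x. \<Sum>j\<in>J. indicator (S j) x * F j) = (\<Sum>j\<in>J. prob (S j) * F j)"
proof -
  have "expectation (\<lambda>x. \<Sum>j\<in>J. indicator (S j) x * F j) = (\<Sum>j\<in>J. expectation (\<lambda>x. indicator (S j) x * F j))"
    by (rule Bochner_Integration.integral_sum) (use assms in \<open>simp add: emeasure_eq_measure\<close>)
  also have "\<dots> = (\<Sum>j\<in>J. prob (S j) * F j)"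
    using assms by simp
  finally show ?thesis .
qed

lemma (in prob_space) expectation_bin_index_fun:
  fixes F :: "nat \<Rightarrow> real"
  assumes "binning_scheme B I" and X[measurable]: "X \<in> borel_measurable M"
    and "AE x in M. X x \<in> {0..1}"
  shows "expectation (\<lambda>x. F (bin_index B I (X x))) = (\<Sum>j<B. prob {x \<in> space M. X x \<in> I j} * F j)"
proof -
  have "expectation (\<lambda>x. F (bin_index B I (X x))) = expectation (\<lambda>x. \<Sum>j<B. indicator (I j) (X x) * F j)"
  proof (rule integral_cong_AE)
    show "(\<lambda>x. F (bin_index B I (X x))) \<in> borel_measurable M"
      by (rule measurable_compose[OF X measurable_bin_index_fun[OF assms(1)]])
    have [measurable]: "j \<in> {..<B} \<Longrightarrow> I j \<in> sets borel" for j
      using binning_scheme_sets[OF assms(1)] by simp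
    show "(\<lambda>x. \<Sum>j<B. indicator (I j) (X x) * F j) \<in> borel_measurable M"
      by measurable
    show "AE x in M. F (bin_index B I (X x)) = (\<Sum>j<B. indicator (I j) (X x) * F j)"
      using assms(3) by eventually_elim (rule bin_index_fun_eq_sum[OF assms(1)])
  qed
  also have "\<dots> = expectation (\<lambda>x. \<Sum>j<B. indicator {x \<in> space M. X x \<in> I j} x * F j)"
    by (intro Bochner_Integration.integral_cong refl sum.cong) (auto simp: indicator_def)
  also have "\<dots> = (\<Sum>j<B. prob {x \<in> space M. X x \<in> I j} * F j)"
  proof (rule expectation_sum_indicator_mult)
    show "{x \<in> space M. X x \<in> I j} \<in> events" if "j \<in> {..<B}" for j
      using measurable_sets[OF X binning_scheme_sets[OF assms(1)], of j] that
      by (simp add: vimage_def Int_def conj_commute)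
  qed
  finally show ?thesis .
qed

section \<open>Error of the empirically binned function\<close>

lemma ln_three_mult_le:
  fixes x :: real
  assumes "2 \<le> x"
  shows "ln (3 * x) \<le> 3 * ln x"
proof -
  have "3 * x \<le> x ^ 3"
    using mult_right_mono[of 4 "x\<^sup>2" x] assms power_mono[of 2 x 2]
    by (simp add: power2_eq_square power3_eq_cube)
  then have "ln (3 * x) \<le> ln (x ^ 3)"
    using assms by simp
  also have "\<dots> = 3 * ln x"
    using assms by (simp add: ln_realpow)
  finally show ?thesis .
qed

lemma sum_weighted_sq_errors_le:
  fixes p d w :: "nat \<Rightarrow> real" and B n :: nat
  assumes p: "\<And>j. j < B \<Longrightarrow> 0 < p j"
    and w: "\<And>j. j < B \<Longrightarrow> 0 \<le> w j" and w_sum: "(\<Sum>j<B. w j) \<le> 2"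
    and d: "\<And>j. j < B \<Longrightarrow> \<bar>d j\<bar> \<le> 4 * w j * sqrt (L / (real n * p j))"
    and "0 \<le> L" "0 < n"
  shows "(\<Sum>j<B. p j * (d j)\<^sup>2) \<le> 64 * L / real n"
proof -
  have sq: "p j * (d j)\<^sup>2 \<le> 16 * L / real n * (w j)\<^sup>2" if "j < B" for j
  proof -
    have "p j * (d j)\<^sup>2 = p j * \<bar>d j\<bar>\<^sup>2" by simp
    also have "\<dots> \<le> p j * (4 * w j * sqrt (L / (real n * p j)))\<^sup>2"
      using p[OF that] d[OF that] by (intro mult_left_mono power_mono) auto
    also have "\<dots> = 16 * L / real n * (w j)\<^sup>2"
      using p[OF that] \<open>0 \<le> L\<close> \<open>0 < n\<close> by (simp add: power_mult_distrib field_simps)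
    finally show ?thesis .
  qed
  have "(w j)\<^sup>2 \<le> 2 * w j" if "j < B" for j
  proof -
    have "w j \<le> 2"
      using member_le_sum[of j "{..<B}" w] w w_sum that by force
    then show ?thesis using w[OF that] by (simp add: power2_eq_square mult_right_mono)
  qed
  then have "(\<Sum>j<B. (w j)\<^sup>2) \<le> (\<Sum>j<B. 2 * w j)"
    by (intro sum_mono) simp
  also have "\<dots> \<le> 4"
    using w_sum by (simp add: sum_distrib_left[symmetric])
  finally have "(\<Sum>j<B. (w j)\<^sup>2) \<le> 4" .
  have "(\<Sum>j<B. p j * (d j)\<^sup>2) \<le> (\<Sum>j<B. 16 * L / real n * (w j)\<^sup>2)"
    using sq by (intro sum_mono) simp
  also have "\<dots> = 16 * L / real n * (\<Sum>j<B. (w j)\<^sup>2)"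
    by (simp add: sum_distrib_left)
  also have "\<dots> \<le> 16 * L / real n * 4"
    using \<open>(\<Sum>j<B. (w j)\<^sup>2) \<le> 4\<close> \<open>0 \<le> L\<close> by (intro mult_left_mono) auto
  finally show ?thesis by simp
qed

lemma sum_weighted_abs_errors_le:
  fixes p d w :: "nat \<Rightarrow> real" and B n :: nat
  assumes p: "\<And>j. j < B \<Longrightarrow> 0 < p j \<and> p j \<le> 2 / real B"
    and w: "\<And>j. j < B \<Longrightarrow> 0 \<le> w j" and w_sum: "(\<Sum>j<B. w j) \<le> 2"
    and d: "\<And>j. j < B \<Longrightarrow> \<bar>d j\<bar> \<le> 4 * w j * sqrt (L / (real n * p j))"
    and "0 \<le> L"
  shows "(\<Sum>j<B. p j * \<bar>d j\<bar>) \<le> 8 * sqrt (2 * L / (real B * real n))"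
proof -
  have abs: "p j * \<bar>d j\<bar> \<le> 4 * sqrt (2 * L / (real B * real n)) * w j" if "j < B" for j
  proof -
    have "p j * sqrt (L / (real n * p j)) = sqrt ((p j)\<^sup>2 * (L / (real n * p j)))"
      using p[OF that] unfolding real_sqrt_mult real_sqrt_abs by simp
    also have "\<dots> = sqrt (p j * L / real n)"
      using p[OF that] by (simp add: power2_eq_square field_simps)
    also have "\<dots> \<le> sqrt (2 / real B * L / real n)"
      using p[OF that] \<open>0 \<le> L\<close> by (intro real_sqrt_le_mono divide_right_mono mult_right_mono) auto
    finally have "p j * sqrt (L / (real n * p j)) \<le> sqrt (2 * L / (real B * real n))"
      by simp
    then have "4 * w j * (p j * sqrt (L / (real n * p j))) \<le> 4 * w j * sqrt (2 * L / (real B * real n))"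
      using w[OF that] by (intro mult_left_mono) auto
    moreover have "p j * \<bar>d j\<bar> \<le> 4 * w j * (p j * sqrt (L / (real n * p j)))"
      using p[OF that] d[OF that] by (simp add: mult_left_mono mult_ac)
    ultimately show ?thesis by (simp add: mult_ac)
  qed
  have "(\<Sum>j<B. p j * \<bar>d j\<bar>) \<le> (\<Sum>j<B. 4 * sqrt (2 * L / (real B * real n)) * w j)"
    using abs by (intro sum_mono) simp
  also have "\<dots> = 4 * sqrt (2 * L / (real B * real n)) * (\<Sum>j<B. w j)"
    by (simp add: sum_distrib_left)
  also have "\<dots> \<le> 4 * sqrt (2 * L / (real B * real n)) * 2"
    using w_sum \<open>0 \<le> L\<close> by (intro mult_left_mono) auto
  finally show ?thesis by simp
qed

lemma sqrt_le_const_div_sqrt_mult_sqrt: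
  fixes a c m L K :: real
  assumes "a * L \<le> c\<^sup>2 * K" "0 < m" "0 \<le> c"
  shows "sqrt (a * L / m) \<le> c / sqrt m * sqrt K"
proof -
  have "sqrt (a * L / m) \<le> sqrt (c\<^sup>2 * K / m)"
    using assms by (intro real_sqrt_le_mono divide_right_mono) auto
  also have "\<dots> = c / sqrt m * sqrt K"
    using assms by (simp add: real_sqrt_mult real_sqrt_divide)
  finally show ?thesis .
qed

locale binned_calibration = prob_space M for M :: "(real \<times> bool) measure" +
  fixes g :: "real \<Rightarrow> real" and B :: nat and I :: "nat \<Rightarrow> real set"
  assumes sets_M: "sets M = sets (borel \<Otimes>\<^sub>M count_space UNIV)"
    and AE_unit: "AE x in M. fst x \<in> {0..1}"
    and g_measurable: "g \<in> borel_measurable borel"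
    and g_unit: "\<forall>z\<in>{0..1}. g z \<in> {0..1}"
    and binning: "binning_scheme B I"
    and balanced: "well_balanced2 M g B I"
begin

abbreviation bin :: "nat \<Rightarrow> (real \<times> bool) set" where
  "bin j \<equiv> bin_event M g (I j)"

definition bin_error :: "nat \<Rightarrow> (nat \<Rightarrow> real \<times> bool) \<Rightarrow> nat \<Rightarrow> real" where
  "bin_error n T j = emp_cond_mean (bin j) (\<lambda>x. g (fst x)) n T - cond_mean M (bin j) (\<lambda>x. g (fst x))"

text \<open>The summand \<open>1 / B\<close> keeps every width positive, as the Bernstein bound requires,
  while the widths still sum to at most 2.\<close>
definition bin_width :: "nat \<Rightarrow> real" where
  "bin_width j = measure lborel (I j) + 1 / real B"

lemma space_M: "space M = UNIV"
  using sets_eq_imp_space_eq[OF sets_M] by (simp add: space_pair_measure)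

lemma measurable_g_fst[measurable]: "(\<lambda>x. g (fst x)) \<in> borel_measurable M"
  using g_measurable by (simp add: measurable_cong_sets[OF sets_M refl])

lemma bin_events: "j < B \<Longrightarrow> bin j \<in> events"
  using binning_scheme_sets[OF binning] unfolding bin_event_def by measurable

lemma prob_bin_bounds:
  assumes "j < B"
  shows "1 / (2 * real B) \<le> prob (bin j)" "prob (bin j) \<le> 2 / real B" "0 < prob (bin j)"
proof -
  show "1 / (2 * real B) \<le> prob (bin j)" "prob (bin j) \<le> 2 / real B"
    using balanced assms by (simp_all add: well_balanced2_def)
  moreover have "0 < 1 / (2 * real B)" using assms by simp
  ultimately show "0 < prob (bin j)" by linarith
qed

lemma bin_width_pos: "0 < bin_width j"
  using binning by (simp add: bin_width_def binning_scheme_def add_nonneg_pos)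

lemma sum_bin_width_le: "(\<Sum>j<B. bin_width j) \<le> 2"
  using binning_scheme_sum_measure_le_1[OF binning] binning
  by (simp add: bin_width_def sum.distrib binning_scheme_def)

lemma bin_spread:
  assumes "j < B" "x \<in> bin j" "y \<in> bin j"
  shows "\<bar>g (fst x) - g (fst y)\<bar> \<le> bin_width j"
proof -
  have "\<bar>g (fst x) - g (fst y)\<bar> \<le> measure lborel (I j)"
    using assms binning_scheme_subset[OF binning assms(1)] binning
    by (intro abs_diff_le_measure_interval[where a=0 and b=1]) (auto simp: bin_event_def binning_scheme_def)
  moreover have "0 \<le> 1 / real B" by simp
  ultimately show ?thesis unfolding bin_width_def by linarith
qed

lemma measurable_bin_error[measurable]:
  "j \<in> {..<B} \<Longrightarrow> (\<lambda>T. bin_error n T j) \<in> borel_measurable (PiM {..<n} (\<lambda>_. M))"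
  unfolding bin_error_def using bin_events by measurable

lemma emp_binned_minus_pop_binned:
  "emp_binned g B I n T z - pop_binned M g B I z = bin_error n T (bin_index B I (g z))"
  by (simp add: emp_binned_def pop_binned_def bin_error_def emp_cond_mean_def cond_mean_def
      bin_event_def space_M Let_def)

lemma expectation_bin_fun:
  "expectation (\<lambda>x. F (bin_index B I (g (fst x)))) = (\<Sum>j<B. prob (bin j) * F j)"
proof -
  have "AE x in M. g (fst x) \<in> {0..1}"
    using AE_unit by eventually_elim (use g_unit in auto)
  then show ?thesis
    using expectation_bin_index_fun[OF binning measurable_g_fst] by (simp add: bin_event_def)
qed

lemma L2_dist_eq_sum:
  "L2_dist M (emp_binned g B I n T) (pop_binned M g B I) = sqrt (\<Sum>j<B. prob (bin j) * (bin_error n T j)\<^sup>2)"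
  unfolding L2_dist_def emp_binned_minus_pop_binned by (rule arg_cong[OF expectation_bin_fun])

lemma L1_dist_eq_sum:
  "L1_dist M (emp_binned g B I n T) (pop_binned M g B I) = (\<Sum>j<B. prob (bin j) * \<bar>bin_error n T j\<bar>)"
  unfolding L1_dist_def emp_binned_minus_pop_binned by (rule expectation_bin_fun)

lemma prob_bin_error_gt:
  assumes "j < B" "0 < L" "16 * L \<le> real n * prob (bin j)"
  shows "measure (PiM {..<n} (\<lambda>_. M)) {T \<in> space (PiM {..<n} (\<lambda>_. M)).
           4 * bin_width j * sqrt (L / (real n * prob (bin j))) < \<bar>bin_error n T j\<bar>} \<le> 3 * exp (- L)"
  unfolding bin_error_def
  using bin_events[OF assms(1)] prob_bin_bounds(3)[OF assms(1)] measurable_g_fst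
    bin_spread[OF assms(1)] bin_width_pos assms(2,3)
  by (rule prob_emp_cond_mean_dev_gt)

lemma prob_all_bin_errors_le:
  assumes "0 < L" and enough_samples: "\<And>j. j < B \<Longrightarrow> 16 * L \<le> real n * prob (bin j)"
  shows "1 - 3 * real B * exp (- L) \<le> measure (PiM {..<n} (\<lambda>_. M)) {T \<in> space (PiM {..<n} (\<lambda>_. M)).
           \<forall>j<B. \<bar>bin_error n T j\<bar> \<le> 4 * bin_width j * sqrt (L / (real n * prob (bin j)))}"
proof -
  define P where "P = PiM {..<n} (\<lambda>_. M)"
  interpret P: prob_space P unfolding P_def by (rule prob_space_PiM) (rule prob_space_axioms)
  define bad where "bad j = {T \<in> space P.
    4 * bin_width j * sqrt (L / (real n * prob (bin j))) < \<bar>bin_error n T j\<bar>}" for j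
  define good where "good = {T \<in> space P.
    \<forall>j<B. \<bar>bin_error n T j\<bar> \<le> 4 * bin_width j * sqrt (L / (real n * prob (bin j)))}"
  have "bad j \<in> sets P" if "j \<in> {..<B}" for j
    using that unfolding bad_def P_def by measurable
  then have bad_sets: "bad ` {..<B} \<subseteq> sets P" by auto
  have "good \<in> sets P"
    unfolding good_def P_def by measurable
  have "space P - good = (\<Union>j<B. bad j)"
    by (auto simp: good_def bad_def not_le)
  then have "measure P (space P - good) \<le> (\<Sum>j<B. measure P (bad j))"
    using P.finite_measure_subadditive_finite[OF _ bad_sets] by simp
  also have "\<dots> \<le> (\<Sum>j<B. 3 * exp (- L))"
    using prob_bin_error_gt \<open>0 < L\<close> enough_samples by (intro sum_mono) (simp add: bad_def P_def)
  finally show ?thesis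
    using P.prob_compl[OF \<open>good \<in> sets P\<close>] by (simp add: good_def P_def)
qed

lemma dists_le_of_bin_errors_le:
  assumes errors: "\<forall>j<B. \<bar>bin_error n T j\<bar> \<le> 4 * bin_width j * sqrt (L / (real n * prob (bin j)))"
    and "0 \<le> L" "L \<le> 3 * K" "0 < n"
  shows "L2_dist M (emp_binned g B I n T) (pop_binned M g B I) \<le> 14 / sqrt (real n) * sqrt K"
    and "L1_dist M (emp_binned g B I n T) (pop_binned M g B I) \<le> 20 / sqrt (real n * real B) * sqrt K"
proof -
  have bounds: "\<And>j. j < B \<Longrightarrow> 0 < prob (bin j) \<and> prob (bin j) \<le> 2 / real B"
    using prob_bin_bounds by auto
  have widths: "\<And>j. j < B \<Longrightarrow> 0 \<le> bin_width j"
    using bin_width_pos less_imp_le by blast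
  have "L2_dist M (emp_binned g B I n T) (pop_binned M g B I) \<le> sqrt (64 * L / real n)"
    unfolding L2_dist_eq_sum using errors \<open>0 \<le> L\<close> \<open>0 < n\<close> bounds
    by (intro real_sqrt_le_mono sum_weighted_sq_errors_le[OF _ widths sum_bin_width_le]) auto
  also have "\<dots> \<le> 14 / sqrt (real n) * sqrt K"
    using \<open>L \<le> 3 * K\<close> \<open>0 \<le> L\<close> \<open>0 < n\<close> by (intro sqrt_le_const_div_sqrt_mult_sqrt) auto
  finally show "L2_dist M (emp_binned g B I n T) (pop_binned M g B I) \<le> 14 / sqrt (real n) * sqrt K" .
  have "L1_dist M (emp_binned g B I n T) (pop_binned M g B I) \<le> 8 * sqrt (2 * L / (real B * real n))"
    unfolding L1_dist_eq_sum using errors \<open>0 \<le> L\<close>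
    by (intro sum_weighted_abs_errors_le[OF bounds widths sum_bin_width_le]) auto
  also have "8 * sqrt (2 * L / (real B * real n)) = sqrt (128 * L / (real n * real B))"
    using real_sqrt_mult[of "8\<^sup>2" "2 * L / (real B * real n)"] by (simp add: mult.commute)
  also have "\<dots> \<le> 20 / sqrt (real n * real B) * sqrt K"
    using \<open>L \<le> 3 * K\<close> \<open>0 \<le> L\<close> \<open>0 < n\<close> binning
    by (intro sqrt_le_const_div_sqrt_mult_sqrt) (auto simp: binning_scheme_def)
  finally show "L1_dist M (emp_binned g B I n T) (pop_binned M g B I) \<le> 20 / sqrt (real n * real B) * sqrt K" .
qed

lemma binned_error_bound:
  assumes "0 < \<delta>" "\<delta> < 1/2" and enough_samples: "96 * real B * ln (real B / \<delta>) \<le> real n"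
  shows "1 - \<delta> \<le> measure (PiM {..<n} (\<lambda>_. M)) {T \<in> space (PiM {..<n} (\<lambda>_. M)).
           L2_dist M (emp_binned g B I n T) (pop_binned M g B I)
             \<le> 14 / sqrt (real n) * sqrt (ln (real B / \<delta>)) \<and>
           L1_dist M (emp_binned g B I n T) (pop_binned M g B I)
             \<le> 20 / sqrt (real n * real B) * sqrt (ln (real B / \<delta>))}"
proof -
  define P where "P = PiM {..<n} (\<lambda>_. M)"
  interpret P: prob_space P unfolding P_def by (rule prob_space_PiM) (rule prob_space_axioms)
  define L where "L = ln (3 * real B / \<delta>)"
    \<comment> \<open>so that the union bound over the \<open>3 B\<close> deviation events costs exactly \<open>\<delta>\<close>\<close>
  define K where "K = ln (real B / \<delta>)"
  have "1 \<le> B" using binning by (simp add: binning_scheme_def)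
  have "2 \<le> real B / \<delta>" using \<open>1 \<le> B\<close> assms(1,2) by (simp add: field_simps)
  then have "L \<le> 3 * K" "0 < L" "0 < K"
    using ln_three_mult_le[of "real B / \<delta>"] by (simp_all add: L_def K_def)
  have "0 < 96 * real B * K" using \<open>1 \<le> B\<close> \<open>0 < K\<close> by simp
  then have "0 < n" using enough_samples by (simp add: K_def)
  have enough_samples_bin: "16 * L \<le> real n * prob (bin j)" if "j < B" for j
  proof -
    have "32 * real B * L \<le> 96 * real B * K"
      using mult_left_mono[OF \<open>L \<le> 3 * K\<close>, of "32 * real B"] by simp
    then have "32 * real B * L \<le> real n"
      using enough_samples unfolding K_def by linarith
    then have "16 * L \<le> real n * (1 / (2 * real B))"
      using \<open>1 \<le> B\<close> by (simp add: field_simps)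
    also have "\<dots> \<le> real n * prob (bin j)"
      using prob_bin_bounds(1)[OF that] by (intro mult_left_mono) auto
    finally show ?thesis .
  qed
  define good where "good = {T \<in> space P.
    \<forall>j<B. \<bar>bin_error n T j\<bar> \<le> 4 * bin_width j * sqrt (L / (real n * prob (bin j)))}"
  define target where "target = {T \<in> space P.
    L2_dist M (emp_binned g B I n T) (pop_binned M g B I) \<le> 14 / sqrt (real n) * sqrt K \<and>
    L1_dist M (emp_binned g B I n T) (pop_binned M g B I) \<le> 20 / sqrt (real n * real B) * sqrt K}"
  have "1 - \<delta> \<le> measure P good"
    using prob_all_bin_errors_le[OF \<open>0 < L\<close> enough_samples_bin] \<open>1 \<le> B\<close> assms(1)
    by (simp add: good_def P_def L_def exp_minus field_simps)
  also have "\<dots> \<le> measure P target"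
  proof (rule P.finite_measure_mono)
    show "good \<subseteq> target"
      using dists_le_of_bin_errors_le[OF _ less_imp_le[OF \<open>0 < L\<close>] \<open>L \<le> 3 * K\<close> \<open>0 < n\<close>]
      by (auto simp: good_def target_def)
    show "target \<in> sets P"
      unfolding target_def P_def L2_dist_eq_sum L1_dist_eq_sum by measurable
  qed
  finally show ?thesis by (simp add: target_def P_def K_def)
qed

end

theorem mainTheorem4:
  "\<exists>cB c1 c2 :: real. cB > 0 \<and> c1 > 0 \<and> c2 > 0 \<and>
    (\<forall>(M :: (real \<times> bool) measure) (g :: real \<Rightarrow> real) (B :: nat) (I :: nat \<Rightarrow> real set) (n :: nat) (\<delta> :: real).
       prob_space M \<longrightarrow>
       sets M = sets (borel \<Otimes>\<^sub>M count_space UNIV) \<longrightarrow>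
       (AE x in M. fst x \<in> {0..1}) \<longrightarrow>
       g \<in> borel_measurable borel \<longrightarrow>
       (\<forall>z\<in>{0..1}. g z \<in> {0..1}) \<longrightarrow>
       binning_scheme B I \<longrightarrow>
       well_balanced2 M g B I \<longrightarrow>
       0 < \<delta> \<longrightarrow> \<delta> < 1/2 \<longrightarrow>
       real n \<ge> cB * real B * ln (real B / \<delta>) \<longrightarrow>
       measure (PiM {..<n} (\<lambda>_. M))
         {T \<in> space (PiM {..<n} (\<lambda>_. M)).
            L2_dist M (emp_binned g B I n T) (pop_binned M g B I)
              \<le> c2 / sqrt (real n) * sqrt (ln (real B / \<delta>)) \<and>
            L1_dist M (emp_binned g B I n T) (pop_binned M g B I)
              \<le> c1 / sqrt (real n * real B) * sqrt (ln (real B / \<delta>))}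
       \<ge> 1 - \<delta>)"
  by (rule exI[of _ 96], rule exI[of _ 20], rule exI[of _ 14])
    (intro conjI allI impI zero_less_numeral binned_calibration.binned_error_bound
      binned_calibration.intro binned_calibration_axioms.intro; assumption)

end
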